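(* If $p>1$, then \begin{equation*} \langle\!\langle f_{1/(p-1)}\rangle\!\rangle_{\mathbb R}= \langle\!\langle f_{-1/p}\rangle\!\rangle_{\mathbb R}\equiv \varepsilon_{\mathbb R}(p)= \varepsilon_{\mathbb R_+}(p)\cdot \max_{0\le\eta\le1}\psi\left(\frac1{p-1},\eta\right), \end{equation*} where $\varepsilon_{\mathbb R_+}(p)=\langle\!\langle f_{1/(p-1)}\rangle\!\rangle_{\mathbb R_+}=\langle\!\langle f_{-1/p}\rangle\!\rangle_{\mathbb R_+}=2\frac{(p-1)^{p-1}}{p^p}$.
   Context: Let $R$ be $\mathbb R$ or $\mathbb R_+=[0,\infty)$. For a non-negative function $f$ locally summable on $R$ and a bounded interval $I\subset R$, set $f_I=\frac1{|I|}\int_I f(x)\,dx$ and $\Omega(f;I)=\frac1{|I|}\int_I|f(x)-f_I|\,dx$. The relative oscillation is $\langle f\rangle_I=\Omega(f;I)/f_I$, and the Gurov--Reshetnyak "norm" of $f$ on $R$ is $\langle\!\langle f\rangle\!\rangle_R=\sup_{I\subset R}\langle f\rangle_I$, the supremum over bounded subintervals $I$ of $R$. Let $f_\alpha(x)=|x|^\alpha$ ($x\in\mathbb R$, $\alpha>-1$). For $\alpha>-1$, $\alpha\neq0$ and $0\le\eta\le1$, define \begin{equation*} \psi(\alpha,\eta)=\left\{\begin{array}{ll} \displaystyle\frac{\left(1+\eta^{\alpha+1}\right)^{1/\alpha}}{(1+\eta)^{(\alpha+1)/\alpha}}+ \frac{(\alpha+1)^{(\alpha+1)/\alpha}}\alpha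 \left[\frac1{1+\eta^{\alpha+1}}-\frac1{1+\eta}\right],& \text{ if }\; 0\le\eta\le\eta_1,\\[10pt] \displaystyle 2\frac{\left(1+\eta^{\alpha+1}\right)^{1/\alpha}}{(1+\eta)^{(\alpha+1)/\alpha}},& \text{ if }\; \eta_1\le\eta\le1, \end{array}\right. \end{equation*} where $\eta_1=\eta_1(\alpha)\in(0,1)$ is the root of $\eta^\alpha=1/(1+\alpha(\eta+1))$. *)

theory Defs
  imports "HOL-Analysis.Analysis"
begin

definition mean_on :: "(real \<Rightarrow> real) \<Rightarrow> real \<Rightarrow> real \<Rightarrow> real" where
  "mean_on f a b = (LINT x:{a..b}|lborel. f x) / (b - a)"

definition osc_on :: "(real \<Rightarrow> real) \<Rightarrow> real \<Rightarrow> real \<Rightarrow> real" where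
  "osc_on f a b = (LINT x:{a..b}|lborel. \<bar>f x - mean_on f a b\<bar>) / (b - a)"

definition rel_osc :: "(real \<Rightarrow> real) \<Rightarrow> real \<Rightarrow> real \<Rightarrow> real" where
  "rel_osc f a b = osc_on f a b / mean_on f a b"

definition GR_norm :: "(real \<Rightarrow> real) \<Rightarrow> real set \<Rightarrow> real" where
  "GR_norm f R = Sup {rel_osc f a b | a b. a < b \<and> {a..b} \<subseteq> R}"

definition f_pow :: "real \<Rightarrow> real \<Rightarrow> real" where
  "f_pow \<alpha> x = \<bar>x\<bar> powr \<alpha>"

definition eta1 :: "real \<Rightarrow> real" where
  "eta1 \<alpha> = (THE \<eta>. 0 < \<eta> \<and> \<eta> < 1 \<and> \<eta> powr \<alpha> = 1 / (1 + \<alpha> * (\<eta> + 1)))"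

definition psi :: "real \<Rightarrow> real \<Rightarrow> real" where
  "psi \<alpha> \<eta> =
    (if \<eta> \<le> eta1 \<alpha> then
       (1 + \<eta> powr (\<alpha> + 1)) powr (1 / \<alpha>) / (1 + \<eta>) powr ((\<alpha> + 1) / \<alpha>)
       + (\<alpha> + 1) powr ((\<alpha> + 1) / \<alpha>) / \<alpha>
         * (1 / (1 + \<eta> powr (\<alpha> + 1)) - 1 / (1 + \<eta>))
     else
       2 * (1 + \<eta> powr (\<alpha> + 1)) powr (1 / \<alpha>) / (1 + \<eta>) powr ((\<alpha> + 1) / \<alpha>))"

end

theory Submission
  imports Defs
begin

text \<open>
  For \<open>g > -1\<close>, \<open>g \<noteq> 0\<close>, the relative oscillation of \<open>|x|^g\<close> on \<open>[a,b]\<close> is twice the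
  maximum over \<open>s \<ge> 0\<close> of the (signed) gap between the relative length and the relative
  \<open>|x|^g\<close>-mass of \<open>[a,b] \<inter> [-s,s]\<close>; the maximum sits at the level where \<open>|x|^g\<close> crosses
  its mean. These gaps are unchanged by dilations, by reflection, and by the substitution
  \<open>x = sgn y |y|^(\<alpha>+1)\<close>, which swaps length with mass and so links \<open>|x|^\<alpha>\<close>,
  \<open>\<alpha> = 1/(p-1)\<close>, with \<open>|x|^(-1/p)\<close>; hence the two norms agree on \<open>\<real>\<close> and on \<open>\<real>\<^sub>+\<close>.
  On \<open>\<real>\<^sub>+\<close> convexity of \<open>u\<^sup>q\<close>, \<open>q = \<alpha>+1\<close>, bounds the gap by \<open>max\<^sub>u (u - u\<^sup>q)\<close>,
  which is attained on \<open>[0,1]\<close>. On \<open>\<real>\<close> every interval reduces to some \<open>[-\<eta>,1]\<close>,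
  \<open>0 \<le> \<eta> \<le> 1\<close>, where the gap is computed explicitly: the two branches of \<open>\<psi>\<close> correspond to
  the crossing level lying beyond \<open>\<eta>\<close> or not, i.e. to \<open>\<eta> \<le> \<eta>\<^sub>1\<close>.
\<close>

lemma powr_le_powr_iff:
  fixes x y a :: real
  assumes "0 < a" "0 \<le> x" "0 \<le> y"
  shows "x powr a \<le> y powr a \<longleftrightarrow> x \<le> y"
  using assms powr_mono2[of a x y] powr_less_mono2[of a y x] by (meson less_imp_le not_le)

definition spowr :: "real \<Rightarrow> real \<Rightarrow> real" where
  "spowr q x = (if 0 \<le> x then x powr q else - ((-x) powr q))"

lemma spowr_nonneg: "0 \<le> x \<Longrightarrow> spowr q x = x powr q"
  by (simp add: spowr_def)

lemma spowr_minus: "spowr q (-x) = - spowr q x"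
  by (auto simp: spowr_def)

lemma spowr_strict_mono:
  assumes q: "q > 0" and xy: "x < y"
  shows "spowr q x < spowr q y"
proof (cases "0 \<le> x")
  case True
  then show ?thesis using xy q by (simp add: spowr_def powr_less_mono2)
next
  case False
  have sx: "spowr q x = - ((-x) powr q)" "0 < (-x) powr q" using False by (simp_all add: spowr_def)
  show ?thesis
  proof (cases "0 \<le> y")
    case True
    then have "0 \<le> spowr q y" by (simp add: spowr_def)
    then show ?thesis using sx by linarith
  next
    case False
    then have "(-y) powr q < (-x) powr q" using xy by (simp add: powr_less_mono2 q)
    then show ?thesis using sx False by (simp add: spowr_def)
  qed
qed

lemma spowr_le_iff: "q > 0 \<Longrightarrow> spowr q x \<le> spowr q y \<longleftrightarrow> x \<le> y"
  using spowr_strict_mono[of q x y] spowr_strict_mono[of q y x] by (cases x y rule: linorder_cases) auto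

lemma spowr_spowr:
  assumes "q > 0"
  shows "spowr (1/q) (spowr q x) = x"
proof (cases "0 \<le> x")
  case True
  then show ?thesis using assms by (simp add: spowr_def powr_powr)
next
  case False
  then have "(-x) powr q > 0" by simp
  then show ?thesis using False assms by (simp add: spowr_def powr_powr)
qed

lemma spowr_image_nonneg:
  assumes "q > 0"
  shows "spowr q ` {0..} = {0..}"
proof (intro equalityI subsetI)
  fix y :: real assume "y \<in> {0..}"
  then have "y = spowr q (spowr (1/q) y)" "spowr (1/q) y \<in> {0..}"
    using spowr_spowr[of "1/q" y] assms by (simp_all add: spowr_nonneg)
  then show "y \<in> spowr q ` {0..}" by blast
qed (auto simp: spowr_nonneg)

lemma spowr_mult:
  assumes "lam > 0"
  shows "spowr q (lam * x) = lam powr q * spowr q x"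
proof (cases "0 \<le> x")
  case True
  then show ?thesis using assms by (simp add: spowr_def powr_mult)
next
  case False
  have "(- (lam * x)) powr q = (lam * (-x)) powr q" by simp
  also have "\<dots> = lam powr q * (-x) powr q" using assms False powr_mult[of lam "-x" q] by simp
  finally show ?thesis using assms False by (simp add: spowr_def zero_le_mult_iff)
qed

definition f_pow_prim :: "real \<Rightarrow> real \<Rightarrow> real" where
  "f_pow_prim g x = spowr (g + 1) x / (g + 1)"

lemma f_pow_prim_nonneg: "0 \<le> x \<Longrightarrow> f_pow_prim g x = x powr (g + 1) / (g + 1)"
  by (simp add: f_pow_prim_def spowr_nonneg)

lemma f_pow_prim_minus: "f_pow_prim g (-x) = - f_pow_prim g x"
  by (simp add: f_pow_prim_def spowr_minus)

lemma f_pow_prim_strict_mono: "g > -1 \<Longrightarrow> x < y \<Longrightarrow> f_pow_prim g x < f_pow_prim g y"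
  by (simp add: f_pow_prim_def divide_strict_right_mono spowr_strict_mono)

lemma f_pow_prim_mult:
  "lam > 0 \<Longrightarrow> f_pow_prim g (lam * x) = lam powr (g + 1) * f_pow_prim g x"
  by (simp add: f_pow_prim_def spowr_mult)

lemma f_pow_prim_has_derivative:
  assumes g: "g > -1" and x: "x \<noteq> 0"
  shows "(f_pow_prim g has_real_derivative f_pow g x) (at x)"
proof (cases "x > 0")
  case True
  have d: "((\<lambda>y. y powr (g+1) / (g+1)) has_real_derivative ((g+1) * x powr (g+1-1)) / (g+1)) (at x)"
    by (rule DERIV_cdivide[OF has_real_derivative_powr[OF True]])
  have e: "((g+1) * x powr (g+1-1)) / (g+1) = f_pow g x"
    using g True by (simp add: f_pow_def)
  show ?thesis
    by (rule has_field_derivative_transform_within_open[OF d[unfolded e], of "{0<..}"])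
      (use True in \<open>auto simp: f_pow_prim_def spowr_def\<close>)
next
  case False
  then have xn: "x < 0" using x by simp
  have d0: "((\<lambda>y. y powr (g+1)) has_real_derivative ((g+1) * (-x) powr (g+1-1))) (at (-x))"
    by (rule has_real_derivative_powr) (use xn in simp)
  have d1: "((\<lambda>y. (-y) powr (g+1)) has_real_derivative ((g+1) * (-x) powr (g+1-1)) * (-1)) (at x)"
    using DERIV_chain2[where g=uminus and x=x, OF d0 DERIV_minus[OF DERIV_ident]] by (simp only: mult_ac)
  have d: "((\<lambda>y. - ((-y) powr (g+1)) / (g+1)) has_real_derivative
      - (((g+1) * (-x) powr (g+1-1)) * (-1)) / (g+1)) (at x)"
    using DERIV_cdivide[OF DERIV_minus[OF d1], of "g+1"] by simp
  have e: "- (((g+1) * (-x) powr (g+1-1)) * (-1)) / (g+1) = f_pow g x"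
    using g xn by (simp add: f_pow_def)
  show ?thesis
    by (rule has_field_derivative_transform_within_open[OF d[unfolded e], of "{..<0}"])
      (use xn in \<open>auto simp: f_pow_prim_def spowr_def\<close>)
qed

lemma f_pow_prim_continuous_on:
  assumes g: "g > -1"
  shows "continuous_on S (f_pow_prim g)"
proof -
  have "continuous_on UNIV (\<lambda>x. if x \<le> 0 then - ((-x) powr (g+1)) / (g+1) else x powr (g+1) / (g+1))"
  proof (rule continuous_on_cases_le[where h="\<lambda>x. x"])
    show "continuous_on {x \<in> UNIV. x \<le> 0} (\<lambda>x. - ((-x) powr (g+1)) / (g+1))"
      using g by (intro continuous_intros continuous_on_powr') auto
    show "continuous_on {x \<in> UNIV. 0 \<le> x} (\<lambda>x. x powr (g+1) / (g+1))"
      using g by (intro continuous_intros continuous_on_powr') auto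
  qed (auto intro: continuous_on_id)
  moreover have "(\<lambda>x. if x \<le> 0 then - ((-x) powr (g+1)) / (g+1) else x powr (g+1) / (g+1)) = f_pow_prim g"
    by (rule ext) (auto simp: f_pow_prim_def spowr_def)
  ultimately show ?thesis by (metis continuous_on_subset subset_UNIV)
qed

lemma f_pow_has_integral:
  assumes "g > -1" "u \<le> v"
  shows "(f_pow g has_integral (f_pow_prim g v - f_pow_prim g u)) {u..v}"
  by (rule fundamental_theorem_of_calculus_interior_strong[where S="{0}"])
    (use assms f_pow_prim_has_derivative f_pow_prim_continuous_on in
      \<open>auto simp: has_real_derivative_iff_has_vector_derivative[symmetric]\<close>)

lemma set_integrable_f_pow:
  assumes g: "g > -1"
  shows "set_integrable lborel {u..v} (f_pow g)"
proof (cases "u \<le> v")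
  case True
  have "f_pow g absolutely_integrable_on {u..v}"
    by (rule nonnegative_absolutely_integrable_1)
      (use f_pow_has_integral[OF g True] in \<open>auto simp: f_pow_def\<close>)
  then show ?thesis unfolding set_integrable_def
    by (subst integrable_completion[symmetric]) (auto simp: f_pow_def)
qed (simp add: set_integrable_def)

lemma mean_on_f_pow:
  assumes "g > -1" "a < b"
  shows "mean_on (f_pow g) a b = (f_pow_prim g b - f_pow_prim g a) / (b - a)"
  using assms f_pow_has_integral[of g a b]
  by (simp add: mean_on_def set_borel_integral_eq_integral(2)[OF set_integrable_f_pow] integral_unique)

lemma mean_on_f_pow_pos: "g > -1 \<Longrightarrow> a < b \<Longrightarrow> mean_on (f_pow g) a b > 0"
  by (simp add: mean_on_f_pow f_pow_prim_strict_mono)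

definition clip :: "real \<Rightarrow> real \<Rightarrow> real" where
  "clip s x = max (-s) (min s x)"

lemma clip_mult: "lam > 0 \<Longrightarrow> clip (lam * s) (lam * x) = lam * clip s x"
  by (simp add: clip_def max_mult_distrib_left min_mult_distrib_left)

lemma clip_minus: "s \<ge> 0 \<Longrightarrow> clip s (-x) = - clip s x"
  by (auto simp: clip_def max_def min_def)

lemma clip_spowr:
  assumes "q > 0"
  shows "clip (spowr q s) (spowr q x) = spowr q (clip s x)"
proof -
  have "min (spowr q s) (spowr q x) = spowr q (min s x)"
    using spowr_le_iff[OF assms] by (auto simp: min_def)
  moreover have "max (spowr q (-s)) (spowr q z) = spowr q (max (-s) z)" for z
    using spowr_le_iff[OF assms] by (auto simp: max_def)
  ultimately show ?thesis by (simp add: clip_def spowr_minus)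
qed

lemma f_pow_diff_has_integral:
  assumes "g > -1" "u \<le> v"
  shows "((\<lambda>x. f_pow g x - m) has_integral f_pow_prim g v - f_pow_prim g u - m * (v - u)) {u..v}"
  using has_integral_diff[OF f_pow_has_integral[OF assms] has_integral_const_real[of m u v]] assms(2)
  by (simp add: mult.commute)

definition truncated_deviation :: "real \<Rightarrow> real \<Rightarrow> real \<Rightarrow> real \<Rightarrow> real \<Rightarrow> real" where
  "truncated_deviation g m a b s =
     f_pow_prim g (clip s b) - f_pow_prim g (clip s a) - m * (clip s b - clip s a)"

lemma truncated_deviation_has_integral:
  assumes g: "g > -1" and s: "s \<ge> 0" and ab: "a \<le> b"
  shows "((\<lambda>x. if x \<in> {-s..s} then f_pow g x - m else 0) has_integral
           truncated_deviation g m a b s) {a..b}"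
proof (cases "a \<le> s \<and> -s \<le> b")
  case True
  have "{-s..s} \<inter> {a..b} = {clip s a..clip s b}"
    using True s by (auto simp: clip_def)
  moreover have "clip s a \<le> clip s b" using ab by (auto simp: clip_def)
  ultimately show ?thesis
    using f_pow_diff_has_integral[OF g, of "clip s a" "clip s b" m]
    by (subst has_integral_restrict_Int) (simp add: truncated_deviation_def)
next
  case False
  then have "{-s..s} \<inter> {a..b} = {}" "clip s a = clip s b"
    using ab by (auto simp: clip_def)
  then show ?thesis
    by (subst has_integral_restrict_Int) (simp add: truncated_deviation_def)
qed

lemma sgn_f_pow_diff_le_0:
  assumes "g \<noteq> 0" "m > 0" "\<bar>x\<bar> \<le> m powr (1/g)" "x \<noteq> 0"
  shows "sgn g * (f_pow g x - m) \<le> 0"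
proof -
  have m: "(m powr (1/g)) powr g = m" using assms by (simp add: powr_powr)
  show ?thesis
  proof (cases "g > 0")
    case True
    then show ?thesis using powr_mono2[of g "\<bar>x\<bar>" "m powr (1/g)"] assms m by (simp add: f_pow_def)
  next
    case False
    then show ?thesis using powr_mono2'[of g "\<bar>x\<bar>" "m powr (1/g)"] assms m by (simp add: f_pow_def)
  qed
qed

lemma sgn_f_pow_diff_ge_0:
  assumes "g \<noteq> 0" "m > 0" "m powr (1/g) \<le> \<bar>x\<bar>"
  shows "0 \<le> sgn g * (f_pow g x - m)"
proof -
  have m: "(m powr (1/g)) powr g = m" using assms by (simp add: powr_powr)
  show ?thesis
  proof (cases "g > 0")
    case True
    then show ?thesis using powr_mono2[of g "m powr (1/g)" "\<bar>x\<bar>"] assms m by (simp add: f_pow_def)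
  next
    case False
    then show ?thesis using powr_mono2'[of g "m powr (1/g)" "\<bar>x\<bar>"] assms m by (simp add: f_pow_def)
  qed
qed

lemma truncated_deviation_threshold_le:
  assumes g: "g > -1" "g \<noteq> 0" and m: "m > 0" and ab: "a \<le> b" and s: "s \<ge> 0"
  shows "sgn g * truncated_deviation g m a b (m powr (1/g)) \<le> sgn g * truncated_deviation g m a b s"
proof -
  let ?t = "m powr (1/g)"
  have "?t \<ge> 0" by simp
  note I = truncated_deviation_has_integral[OF g(1) _ ab, where m=m,
      THEN has_integral_mult_right[where c="sgn g"]]
  show ?thesis
  proof (rule has_integral_le[OF I[OF \<open>?t \<ge> 0\<close>] I[OF s]])
    fix x
    show "sgn g * (if x \<in> {-?t..?t} then f_pow g x - m else 0)
          \<le> sgn g * (if x \<in> {-s..s} then f_pow g x - m else 0)"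
    proof (cases "x = 0")
      case True
      then show ?thesis using s m by simp
    next
      case False
      then show ?thesis
        using sgn_f_pow_diff_le_0[OF g(2) m _ False] sgn_f_pow_diff_ge_0[OF g(2) m, of x]
        by (cases "\<bar>x\<bar> \<le> ?t"; cases "\<bar>x\<bar> \<le> s") (auto simp: abs_le_iff)
    qed
  qed
qed

lemma abs_deviation_has_integral:
  assumes g: "g > -1" "g \<noteq> 0" and m: "m > 0" and ab: "a \<le> b"
    and mean: "m * (b - a) = f_pow_prim g b - f_pow_prim g a"
  shows "((\<lambda>x. \<bar>f_pow g x - m\<bar>) has_integral
           - 2 * sgn g * truncated_deviation g m a b (m powr (1/g))) {a..b}"
proof -
  let ?t = "m powr (1/g)"
  have "((\<lambda>x. sgn g * (f_pow g x - m) - 2 * sgn g * (if x \<in> {-?t..?t} then f_pow g x - m else 0))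
      has_integral (sgn g * (f_pow_prim g b - f_pow_prim g a - m * (b - a))
                    - 2 * sgn g * truncated_deviation g m a b ?t)) {a..b}"
    by (intro has_integral_diff has_integral_mult_right truncated_deviation_has_integral
        f_pow_diff_has_integral g(1) ab) simp
  then have "((\<lambda>x. sgn g * (f_pow g x - m) - 2 * sgn g * (if x \<in> {-?t..?t} then f_pow g x - m else 0))
      has_integral (- 2 * sgn g * truncated_deviation g m a b ?t)) {a..b}"
    using mean by simp
  then show ?thesis
  proof (rule has_integral_spike[OF negligible_sing[of 0], rotated])
    fix x assume "x \<in> {a..b} - {0}"
    then have x: "x \<noteq> 0" by simp
    show "\<bar>f_pow g x - m\<bar>
      = sgn g * (f_pow g x - m) - 2 * sgn g * (if x \<in> {-?t..?t} then f_pow g x - m else 0)"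
      using sgn_f_pow_diff_le_0[OF g(2) m _ x] sgn_f_pow_diff_ge_0[OF g(2) m, of x] g(2)
      by (cases "\<bar>x\<bar> \<le> ?t") (auto simp: abs_le_iff sgn_if split: if_splits)
  qed
qed

definition mass_defect :: "real \<Rightarrow> real \<Rightarrow> real \<Rightarrow> real \<Rightarrow> real" where
  "mass_defect g a b s = sgn g * ((clip s b - clip s a) / (b - a)
     - (f_pow_prim g (clip s b) - f_pow_prim g (clip s a)) / (f_pow_prim g b - f_pow_prim g a))"

lemma osc_on_f_pow:
  assumes g: "g > -1" "g \<noteq> 0" and ab: "a < b"
  defines "m \<equiv> mean_on (f_pow g) a b"
  shows "osc_on (f_pow g) a b = - 2 * sgn g * truncated_deviation g m a b (m powr (1/g)) / (b - a)"
proof -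
  have "m * (b - a) = f_pow_prim g b - f_pow_prim g a"
    using ab by (simp add: m_def mean_on_f_pow[OF g(1) ab])
  note I = abs_deviation_has_integral[OF g mean_on_f_pow_pos[OF g(1) ab, folded m_def] _ this]
  have "set_integrable lborel {a..b} (\<lambda>x. \<bar>f_pow g x - m\<bar>)"
    by (intro set_integrable_abs set_integral_diff(1) set_integrable_f_pow[OF g(1)]
        borel_integrable_atLeastAtMost' continuous_on_const)
  then show ?thesis
    using I ab by (simp add: osc_on_def m_def[symmetric] set_borel_integral_eq_integral(2) integral_unique)
qed

lemma rel_osc_f_pow_eq_mass_defect:
  assumes g: "g > -1" "g \<noteq> 0" and ab: "a < b"
  defines "t \<equiv> mean_on (f_pow g) a b powr (1/g)"
  shows "rel_osc (f_pow g) a b = 2 * mass_defect g a b t"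
    and "s \<ge> 0 \<Longrightarrow> mass_defect g a b s \<le> mass_defect g a b t"
proof -
  define m where "m = mean_on (f_pow g) a b"
  define M where "M = f_pow_prim g b - f_pow_prim g a"
  have M: "M > 0" using f_pow_prim_strict_mono[OF g(1) ab] by (simp add: M_def)
  have mM: "m = M / (b - a)" by (simp add: m_def M_def mean_on_f_pow[OF g(1) ab])
  have defect: "mass_defect g a b s = - sgn g * truncated_deviation g m a b s / M" for s
    using M ab by (simp add: mass_defect_def truncated_deviation_def mM M_def[symmetric] field_simps)
  have "rel_osc (f_pow g) a b = - 2 * sgn g * truncated_deviation g m a b t / M"
    using M ab by (simp add: rel_osc_def osc_on_f_pow[OF g ab] m_def[symmetric] t_def mM)
  then show "rel_osc (f_pow g) a b = 2 * mass_defect g a b t"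
    by (simp add: defect)
  show "mass_defect g a b s \<le> mass_defect g a b t" if "s \<ge> 0"
    using truncated_deviation_threshold_le[OF g mean_on_f_pow_pos[OF g(1) ab] _ that, of a b] ab M
    by (simp add: defect divide_right_mono m_def[symmetric] t_def)
qed

lemma rel_osc_f_pow_eq_Sup_mass_defect:
  assumes "g > -1" "g \<noteq> 0" "a < b"
  shows "rel_osc (f_pow g) a b = 2 * Sup (mass_defect g a b ` {0..})"
proof -
  let ?t = "mean_on (f_pow g) a b powr (1/g)"
  have "Sup (mass_defect g a b ` {0..}) = mass_defect g a b ?t"
    using rel_osc_f_pow_eq_mass_defect(2)[OF assms] by (intro cSup_eq_maximum) auto
  then show ?thesis using rel_osc_f_pow_eq_mass_defect(1)[OF assms] by simp
qed

lemma rel_osc_f_pow_eq_by_reparam: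
  assumes "g1 > -1" "g1 \<noteq> 0" "a1 < b1" "g2 > -1" "g2 \<noteq> 0" "a2 < b2"
    and "h ` {0..} = {0..}"
    and "\<And>s. s \<ge> 0 \<Longrightarrow> mass_defect g1 a1 b1 (h s) = mass_defect g2 a2 b2 s"
  shows "rel_osc (f_pow g1) a1 b1 = rel_osc (f_pow g2) a2 b2"
proof -
  have "mass_defect g1 a1 b1 ` {0..} = (mass_defect g1 a1 b1 \<circ> h) ` {0..}"
    using image_image[of "mass_defect g1 a1 b1" h "{0..}"] assms(7) by simp
  also have "\<dots> = mass_defect g2 a2 b2 ` {0..}"
    using assms(8) by (intro image_cong) auto
  finally show ?thesis
    using rel_osc_f_pow_eq_Sup_mass_defect assms(1-6) by metis
qed

lemma rel_osc_f_pow_mult: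
  assumes lam: "lam > 0" and g: "g > -1" "g \<noteq> 0" and ab: "a < b"
  shows "rel_osc (f_pow g) (lam * a) (lam * b) = rel_osc (f_pow g) a b"
proof (rule rel_osc_f_pow_eq_by_reparam[OF g _ g ab])
  show "lam * a < lam * b" using lam ab by simp
  show "(\<lambda>s. lam * s) ` {0..} = {0..}"
  proof (intro equalityI subsetI)
    fix y :: real assume "y \<in> {0..}"
    then show "y \<in> (\<lambda>s. lam * s) ` {0..}" using lam by (intro image_eqI[of _ _ "y / lam"]) auto
  qed (use lam in auto)
  show "mass_defect g (lam * a) (lam * b) (lam * s) = mass_defect g a b s" for s
    using lam by (simp add: mass_defect_def clip_mult f_pow_prim_mult flip: right_diff_distrib)
qed

lemma rel_osc_f_pow_reflect:
  assumes g: "g > -1" "g \<noteq> 0" and ab: "a < b"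
  shows "rel_osc (f_pow g) (-b) (-a) = rel_osc (f_pow g) a b"
  by (rule rel_osc_f_pow_eq_by_reparam[OF g _ g ab, where h=id])
    (use ab in \<open>auto simp: mass_defect_def clip_minus f_pow_prim_minus algebra_simps\<close>)

text \<open>Under \<open>x = spowr (\<alpha>+1) y\<close> one has \<open>dx = (\<alpha>+1) |y|^\<alpha> dy\<close> and
  \<open>|x|^(-\<alpha>/(\<alpha>+1)) dx = (\<alpha>+1) dy\<close>: length and mass exchange roles.\<close>

lemma rel_osc_f_pow_dual:
  assumes al: "al > 0" and ab: "a < b"
  shows "rel_osc (f_pow (- al / (al + 1))) (spowr (al + 1) a) (spowr (al + 1) b) = rel_osc (f_pow al) a b"
proof (rule rel_osc_f_pow_eq_by_reparam)
  let ?q = "al + 1"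
  have q: "?q > 0" using al by simp
  show "- al / ?q > -1" "- al / ?q \<noteq> 0" "al > -1" "al \<noteq> 0" "a < b" using al ab by auto
  show "spowr ?q a < spowr ?q b" by (rule spowr_strict_mono[OF q ab])
  show "spowr ?q ` {0..} = {0..}" by (rule spowr_image_nonneg[OF q])
  have exp: "- al / ?q + 1 = 1 / ?q" using q by (simp add: field_simps)
  have prim: "f_pow_prim (- al / ?q) (spowr ?q y) = ?q * y" for y
    unfolding f_pow_prim_def exp using spowr_spowr[OF q] by simp
  have sgn: "sgn (- al / ?q) = -1" "sgn al = 1" using al by auto
  show "mass_defect (- al / ?q) (spowr ?q a) (spowr ?q b) (spowr ?q s) = mass_defect al a b s"
    if "s \<ge> 0" for s
    unfolding mass_defect_def clip_spowr[OF q] prim sgn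
    using q by (simp add: f_pow_prim_def flip: right_diff_distrib diff_divide_distrib)
qed

lemma powr_critical_point:
  fixes q :: real
  assumes q: "q > 1"
  defines "c \<equiv> q powr (-1 / (q - 1))"
  shows "0 < c" "c \<le> 1" "c powr (q - 1) = 1 / q" "c - c powr q = (q - 1) / q powr (q / (q - 1))"
proof -
  show c0: "0 < c" using q by (simp add: c_def)
  show "c \<le> 1" using q powr_le_cancel_iff[of q "-1 / (q - 1)" 0] by (simp add: c_def)
  have "c powr (q - 1) = q powr (-1)" using q by (simp add: c_def powr_powr)
  then show cq: "c powr (q - 1) = 1 / q" using q by (simp add: powr_minus_divide)
  have "c powr q = c / q" using c0 cq by (simp add: powr_diff field_simps)
  then have "c - c powr q = (q - 1) * (c / q)"
    using q by (simp add: field_simps)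
  also have "c / q = q powr (-1 / (q - 1) - 1)"
    using q by (simp add: c_def powr_diff)
  also have "-1 / (q - 1) - 1 = - (q / (q - 1))"
    using q by (simp add: field_simps)
  finally show "c - c powr q = (q - 1) / q powr (q / (q - 1))"
    by (simp add: powr_minus_divide)
qed

lemma diff_powr_le_critical_value:
  fixes q u :: real
  assumes q: "q > 1" and u: "0 \<le> u"
  shows "u - u powr q \<le> (q - 1) / q powr (q / (q - 1))"
proof -
  define c where "c = q powr (-1 / (q - 1))"
  note C = powr_critical_point[OF q, folded c_def]
  have "u - u powr q \<le> c - c powr q"
  proof (cases "u = 0")
    case True
    then show ?thesis using C(4) q by simp
  next
    case False
    have d: "((\<lambda>x. x powr q) has_field_derivative q * c powr (q - 1)) (at c within {0<..})"
      using has_real_derivative_powr[OF C(1)] by (rule has_field_derivative_at_within)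
    have "q * c powr (q - 1) * (u - c) \<le> u powr q - c powr q"
      by (rule convex_on_imp_above_tangent[OF powr_convex _ _ _ d])
        (use q C(1) u False in \<open>auto simp: interior_open\<close>)
    then show ?thesis using C(3) q by simp
  qed
  then show ?thesis using C(4) by simp
qed

lemma one_plus_powr_diff_mono:
  fixes q w1 w2 :: real
  assumes q: "q \<ge> 1" and w: "0 < w1" "w1 \<le> w2"
  shows "(1 + w1) powr q - w1 powr q \<le> (1 + w2) powr q - w2 powr q"
proof (rule DERIV_nonneg_imp_nondecreasing[OF w(2)])
  fix x assume "w1 \<le> x" "x \<le> w2"
  then have x: "x > 0" using w by simp
  have "((\<lambda>x. (1 + x) powr q - x powr q) has_real_derivative
      q * (1 + x) powr (q - 1) * 1 - q * x powr (q - 1)) (at x)"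
    using x by (intro derivative_eq_intros) auto
  moreover have "q * (1 + x) powr (q - 1) * 1 - q * x powr (q - 1) \<ge> 0"
    using powr_mono2[of "q - 1" x "1 + x"] q x by simp
  ultimately show "\<exists>y. ((\<lambda>x. (1 + x) powr q - x powr q) has_real_derivative y) (at x) \<and> 0 \<le> y"
    by blast
qed

lemma powr_ratio_le_powr_diff_ratio:
  fixes q a b c :: real
  assumes q: "q \<ge> 1" and a: "0 \<le> a" "a < c" "c \<le> b"
  shows "((c - a) / (b - a)) powr q \<le> (c powr q - a powr q) / (b powr q - a powr q)"
proof (cases "a = 0")
  case True
  then show ?thesis using a by (simp add: powr_divide)
next
  case False
  then have ap: "a > 0" using a by simp
  have diff_eq: "(1 + a / (x - a)) powr q - (a / (x - a)) powr q = (x powr q - a powr q) / (x - a) powr q"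
    if "a < x" for x
  proof -
    have "1 + a / (x - a) = x / (x - a)" using that by (simp add: field_simps)
    then show ?thesis using that ap by (simp add: powr_divide diff_divide_distrib)
  qed
  have "a / (b - a) \<le> a / (c - a)" using ap a by (simp add: frac_le)
  from one_plus_powr_diff_mono[OF q _ this] ap a
  have "(b powr q - a powr q) / (b - a) powr q \<le> (c powr q - a powr q) / (c - a) powr q"
    by (simp add: diff_eq)
  moreover have "b powr q - a powr q > 0" using a ap q by (simp add: powr_less_mono2)
  ultimately show ?thesis using a by (simp add: powr_divide divide_simps mult.commute)
qed

lemma length_ratio_minus_powr_ratio_le:
  fixes q a b c :: real
  assumes q: "q > 1" and a: "0 \<le> a" "a \<le> c" "c \<le> b" "a < b"
  shows "(c - a) / (b - a) - (c powr q - a powr q) / (b powr q - a powr q) \<le> (q - 1) / q powr (q / (q - 1))"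
proof (cases "a = c")
  case True
  then show ?thesis using diff_powr_le_critical_value[OF q, of 0] by simp
next
  case False
  have "((c - a) / (b - a)) powr q \<le> (c powr q - a powr q) / (b powr q - a powr q)"
    by (rule powr_ratio_le_powr_diff_ratio) (use q a False in auto)
  then show ?thesis
    using diff_powr_le_critical_value[OF q, of "(c - a) / (b - a)"] a by simp
qed

text \<open>The constant \<open>\<epsilon>\<^sub>\<real>\<^sub>+(p)\<close> of the paper, as a function of \<open>\<alpha> = 1/(p-1)\<close>.\<close>

definition eps_plus :: "real \<Rightarrow> real" where
  "eps_plus \<alpha> = 2 * \<alpha> / (\<alpha> + 1) powr ((\<alpha> + 1) / \<alpha>)"

lemma eps_plus_pos: "\<alpha> > 0 \<Longrightarrow> eps_plus \<alpha> > 0"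
  by (simp add: eps_plus_def)

lemma rel_osc_f_pow_nonneg_le:
  fixes al a b :: real
  assumes al: "al > 0" and a: "0 \<le> a" "a < b"
  shows "rel_osc (f_pow al) a b \<le> eps_plus al"
proof -
  define t where "t = mean_on (f_pow al) a b powr (1/al)"
  have g: "al > -1" "al \<noteq> 0" using al by auto
  have t: "t > 0" using mean_on_f_pow_pos[OF g(1) a(2)] by (simp add: t_def)
  have "mass_defect al a b t \<le> eps_plus al / 2"
  proof (cases "t \<le> a")
    case True
    then have "mass_defect al a b t = 0" using a t by (simp add: mass_defect_def clip_def)
    then show ?thesis using eps_plus_pos[OF al] by simp
  next
    case False
    define c where "c = min t b"
    have "clip t a = a" "clip t b = c" using False a t by (auto simp: clip_def c_def)
    moreover have "a \<le> c" "c \<le> b" using False a by (auto simp: c_def)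
    ultimately show ?thesis
      using length_ratio_minus_powr_ratio_le[of "al + 1" a c b] al a
      by (simp add: mass_defect_def eps_plus_def f_pow_prim_nonneg diff_divide_distrib[symmetric])
  qed
  then show ?thesis using rel_osc_f_pow_eq_mass_defect(1)[OF g a(2)] by (simp add: t_def)
qed

lemma rel_osc_f_pow_0_1:
  fixes al :: real
  assumes al: "al > 0"
  shows "rel_osc (f_pow al) 0 1 = eps_plus al"
proof -
  define c where "c = (al + 1) powr (-1 / al)"
  have g: "al > -1" "al \<noteq> 0" using al by auto
  have C: "0 < c" "c \<le> 1" "c - c powr (al + 1) = eps_plus al / 2"
    using powr_critical_point[of "al + 1"] al by (simp_all add: c_def eps_plus_def)
  have "clip c 0 = 0" "clip c 1 = c" using C by (auto simp: clip_def)
  then have "mass_defect al 0 1 c = eps_plus al / 2"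
    using C al by (simp add: mass_defect_def f_pow_prim_nonneg)
  then have "eps_plus al \<le> rel_osc (f_pow al) 0 1"
    using rel_osc_f_pow_eq_mass_defect[OF g zero_less_one] less_imp_le[OF C(1)] by force
  then show ?thesis using rel_osc_f_pow_nonneg_le[OF al order_refl zero_less_one] by simp
qed

text \<open>The equation defining \<open>eta1\<close>, with its denominator cleared.\<close>

definition eta1_lhs :: "real \<Rightarrow> real \<Rightarrow> real" where
  "eta1_lhs \<alpha> x = x powr \<alpha> * (1 + \<alpha> * (x + 1))"

lemma eta1_lhs_strict_mono:
  fixes al :: real
  assumes al: "al > 0" and xy: "0 \<le> x" "x < y"
  shows "eta1_lhs al x < eta1_lhs al y"
proof -
  have "x powr al < y powr al" using xy al by (simp add: powr_less_mono2)
  moreover have "0 < 1 + al * (x + 1)" "1 + al * (x + 1) < 1 + al * (y + 1)"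
    using al xy by (auto intro!: add_pos_nonneg)
  ultimately show ?thesis unfolding eta1_lhs_def
    using xy by (intro mult_strict_mono) auto
qed

lemma eta1_lhs_le_iff:
  "al > 0 \<Longrightarrow> 0 \<le> x \<Longrightarrow> 0 \<le> y \<Longrightarrow> eta1_lhs al x \<le> eta1_lhs al y \<longleftrightarrow> x \<le> y"
  using eta1_lhs_strict_mono[of al x y] eta1_lhs_strict_mono[of al y x]
  by (cases x y rule: linorder_cases) auto

lemma eta1_root:
  fixes al :: real
  assumes al: "al > 0"
  shows "0 < eta1 al" "eta1 al < 1" "eta1_lhs al (eta1 al) = 1"
    and "0 \<le> x \<Longrightarrow> x \<le> eta1 al \<longleftrightarrow> eta1_lhs al x \<le> 1"
proof -
  have cont: "continuous_on {0..1} (eta1_lhs al)"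
    unfolding eta1_lhs_def using al by (intro continuous_intros continuous_on_powr') auto
  have k0: "eta1_lhs al 0 = 0" and k1: "eta1_lhs al 1 = 1 + 2 * al"
    using al by (simp_all add: eta1_lhs_def)
  obtain e where e: "0 \<le> e" "e \<le> 1" "eta1_lhs al e = 1"
    using IVT'[of "eta1_lhs al" 0 1 1, OF _ _ _ cont] k0 k1 al by auto
  have e01: "0 < e" "e < 1" using e k0 k1 al by (auto simp: order_le_less)
  have root: "0 < x \<and> x < 1 \<and> x powr al = 1 / (1 + al * (x + 1))
      \<longleftrightarrow> 0 < x \<and> x < 1 \<and> eta1_lhs al x = 1" for x
  proof -
    have "0 < x \<Longrightarrow> 0 < 1 + al * (x + 1)" using al by (simp add: add_pos_pos)
    then show ?thesis by (auto simp: eta1_lhs_def field_simps)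
  qed
  have "eta1 al = e"
    unfolding eta1_def root
  proof (rule the_equality)
    fix x assume "0 < x \<and> x < 1 \<and> eta1_lhs al x = 1"
    then show "x = e" using eta1_lhs_le_iff[OF al, of x e] eta1_lhs_le_iff[OF al, of e x] e by auto
  qed (use e e01 in auto)
  then show "0 < eta1 al" "eta1 al < 1" "eta1_lhs al (eta1 al) = 1" using e e01 by auto
  show "x \<le> eta1 al \<longleftrightarrow> eta1_lhs al x \<le> 1" if "0 \<le> x"
    using eta1_lhs_le_iff[OF al that e(1)] e \<open>eta1 al = e\<close> by simp
qed

definition psi_low :: "real \<Rightarrow> real \<Rightarrow> real" where
  "psi_low \<alpha> \<eta> = (1 + \<eta> powr (\<alpha> + 1)) powr (1 / \<alpha>) / (1 + \<eta>) powr ((\<alpha> + 1) / \<alpha>)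
     + (\<alpha> + 1) powr ((\<alpha> + 1) / \<alpha>) / \<alpha> * (1 / (1 + \<eta> powr (\<alpha> + 1)) - 1 / (1 + \<eta>))"

definition psi_high :: "real \<Rightarrow> real \<Rightarrow> real" where
  "psi_high \<alpha> \<eta> = 2 * (1 + \<eta> powr (\<alpha> + 1)) powr (1 / \<alpha>) / (1 + \<eta>) powr ((\<alpha> + 1) / \<alpha>)"

lemma psi_eq_if: "psi \<alpha> \<eta> = (if \<eta> \<le> eta1 \<alpha> then psi_low \<alpha> \<eta> else psi_high \<alpha> \<eta>)"
  unfolding psi_def psi_low_def psi_high_def ..

lemma mean_on_f_pow_minus_1:
  assumes "al > 0" "0 \<le> e"
  shows "mean_on (f_pow al) (-e) 1 = (1 + e powr (al + 1)) / ((al + 1) * (1 + e))"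
  using assms
  by (simp add: mean_on_f_pow f_pow_prim_minus f_pow_prim_nonneg add_divide_distrib[symmetric])

lemma threshold_minus_1_le_iff:
  assumes al: "al > 0" and e: "0 \<le> e"
  defines "t \<equiv> mean_on (f_pow al) (-e) 1 powr (1/al)"
  shows "e \<le> t \<longleftrightarrow> eta1_lhs al e \<le> 1" and "t \<le> e \<longleftrightarrow> 1 \<le> eta1_lhs al e"
proof -
  define m where "m = mean_on (f_pow al) (-e) 1"
  have m: "m > 0" using mean_on_f_pow_pos[of al "-e" 1] al e by (simp add: m_def)
  have t: "t \<ge> 0" "t powr al = m" using m al by (simp_all add: t_def m_def[symmetric] powr_powr)
  have pos: "0 < (al + 1) * (1 + e)" using al e by simp
  have E: "e powr (al + 1) = e * e powr al" using e by (cases "e = 0") (auto simp: powr_add)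
  have "e \<le> t \<longleftrightarrow> e powr al \<le> m" using powr_le_powr_iff[OF al e t(1)] t(2) by simp
  also have "\<dots> \<longleftrightarrow> eta1_lhs al e \<le> 1"
    unfolding m_def mean_on_f_pow_minus_1[OF al e] E
    using pos by (simp add: pos_le_divide_eq eta1_lhs_def algebra_simps)
  finally show "e \<le> t \<longleftrightarrow> eta1_lhs al e \<le> 1" .
  have "t \<le> e \<longleftrightarrow> m \<le> e powr al" using powr_le_powr_iff[OF al t(1) e] t(2) by simp
  also have "\<dots> \<longleftrightarrow> 1 \<le> eta1_lhs al e"
    unfolding m_def mean_on_f_pow_minus_1[OF al e] E
    using pos by (simp add: pos_divide_le_eq eta1_lhs_def algebra_simps)
  finally show "t \<le> e \<longleftrightarrow> 1 \<le> eta1_lhs al e" .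
qed

lemma mass_defect_minus_1:
  assumes al: "al > 0" and e: "0 \<le> e" "e \<le> 1"
  defines "m \<equiv> mean_on (f_pow al) (-e) 1" and "E \<equiv> e powr (al + 1)"
  defines "t \<equiv> m powr (1/al)"
  shows "e \<le> t \<Longrightarrow> mass_defect al (-e) 1 t = (t + e) / (1 + e) - (t * m + E) / (1 + E)"
    and "t \<le> e \<Longrightarrow> mass_defect al (-e) 1 t = 2 * t / (1 + e) - 2 * t * m / (1 + E)"
proof -
  let ?q = "al + 1"
  have E: "0 \<le> E" "E \<le> e"
    using e al powr_mono'[of 1 ?q e] by (simp_all add: E_def)
  have "0 \<le> al * e" using al e by simp
  then have "1 + E \<le> ?q * (1 + e)" "0 < ?q * (1 + e)"
    using E e al by (simp_all add: algebra_simps, linarith+)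
  then have m: "0 < m" "m \<le> 1"
    using mean_on_f_pow_pos[of al "-e" 1] al e
    by (simp_all add: m_def E_def mean_on_f_pow_minus_1[OF al e(1)])
  have t: "0 < t" "t \<le> 1" "t powr ?q = t * m"
    using m al by (simp_all add: t_def powr_le1 powr_add powr_powr)
  have prim: "f_pow_prim al (-e) = - E / ?q" "f_pow_prim al 1 = 1 / ?q"
    "f_pow_prim al t = t * m / ?q" "f_pow_prim al (-t) = - (t * m / ?q)"
    using e t by (simp_all add: f_pow_prim_minus f_pow_prim_nonneg E_def)
  have frac: "(X / ?q + Y / ?q) / (1 / ?q + E / ?q) = (X + Y) / (1 + E)" for X Y
    using E al by (simp add: add_divide_distrib[symmetric])
  have clip1: "clip t 1 = t" using t by (simp add: clip_def)
  show "mass_defect al (-e) 1 t = (t + e) / (1 + e) - (t * m + E) / (1 + E)" if "e \<le> t"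
  proof -
    have clip2: "clip t (-e) = -e" using that e t by (simp add: clip_def)
    show ?thesis unfolding mass_defect_def clip1 clip2 prim using al by (simp add: frac)
  qed
  show "mass_defect al (-e) 1 t = 2 * t / (1 + e) - 2 * t * m / (1 + E)" if "t \<le> e"
  proof -
    have clip2: "clip t (-e) = -t" using that e t by (simp add: clip_def)
    show ?thesis unfolding mass_defect_def clip1 clip2 prim using al E
      by (simp add: frac add_divide_distrib[symmetric])
  qed
qed

lemma rel_osc_f_pow_minus_1:
  assumes al: "al > 0" and e: "0 \<le> e" "e \<le> 1"
  defines "t \<equiv> mean_on (f_pow al) (-e) 1 powr (1/al)"
  shows "e \<le> t \<Longrightarrow> rel_osc (f_pow al) (-e) 1 = eps_plus al * psi_low al e"
    and "t \<le> e \<Longrightarrow> rel_osc (f_pow al) (-e) 1 = eps_plus al * psi_high al e"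
proof -
  let ?q = "al + 1"
  define E where "E = e powr ?q"
  define m where "m = mean_on (f_pow al) (-e) 1"
  have mE: "m = (1 + E) / (?q * (1 + e))"
    by (simp add: m_def E_def mean_on_f_pow_minus_1[OF al e(1)])
  define P where "P = (1 + E) powr (1/al)"
  define Q where "Q = ?q powr (1/al)"
  define R where "R = (1 + e) powr (1/al)"
  have E: "0 \<le> E" "1 + E \<noteq> 0" using e by (simp_all add: E_def add_nonneg_eq_0_iff)
  have PQR: "P > 0" "Q > 0" "R > 0" using E e al by (auto simp: P_def Q_def R_def)
  have tPQR: "t = P / (Q * R)"
    using E e al by (simp add: t_def m_def[symmetric] mE P_def Q_def R_def powr_divide powr_mult)
  have ex: "(al + 1) / al = 1 / al + 1" using al by (simp add: field_simps)
  have psi: "(1 + e) powr ((al + 1) / al) = R * (1 + e)" "?q powr ((al + 1) / al) = Q * ?q"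
    using e al by (simp_all add: ex R_def Q_def powr_add)
  have eps_half: "eps_plus al / 2 = (?q - 1) / (Q * ?q)" by (simp add: eps_plus_def psi(2))
  have rel: "rel_osc (f_pow al) (-e) 1 = 2 * mass_defect al (-e) 1 t"
    using rel_osc_f_pow_eq_mass_defect(1)[of al "-e" 1] al e by (simp add: t_def)
  note defect = mass_defect_minus_1[OF al e, folded m_def E_def t_def]
  have nz: "1 + e \<noteq> 0" "?q \<noteq> 0" "?q - 1 \<noteq> 0" using e al by auto
  show "rel_osc (f_pow al) (-e) 1 = eps_plus al * psi_low al e" if "e \<le> t"
  proof -
    have "(T + (d - 1)) / d - (T * (F / (q * d)) + (F - 1)) / F
        = (q - 1) / (Q * q) * (P / (R * d) + Q * q / (q - 1) * (1 / F - 1 / d))"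
      if "T = P / (Q * R)" "d \<noteq> 0" "F \<noteq> 0" "q \<noteq> 0" "q - 1 \<noteq> 0" "Q \<noteq> 0" "R \<noteq> 0"
      for T P Q R d F q :: real
      unfolding that(1) using that(2-) by (simp add: field_simps)
    from this[OF tPQR, of "1 + e" "1 + E" ?q]
    have "mass_defect al (-e) 1 t
        = (?q - 1) / (Q * ?q) * (P / (R * (1 + e)) + Q * ?q / (?q - 1) * (1 / (1 + E) - 1 / (1 + e)))"
      using defect(1)[OF that] PQR nz E by (simp add: mE)
    also have "\<dots> = eps_plus al / 2 * psi_low al e"
      unfolding eps_half psi_low_def psi E_def[symmetric] P_def[symmetric] using PQR al by (simp add: field_simps)
    finally show ?thesis using rel by simp
  qed
  show "rel_osc (f_pow al) (-e) 1 = eps_plus al * psi_high al e" if "t \<le> e"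
  proof -
    have "2 * T / d - 2 * T * (F / (q * d)) / F = (q - 1) / (Q * q) * (2 * P / (R * d))"
      if "T = P / (Q * R)" "d \<noteq> 0" "F \<noteq> 0" "q \<noteq> 0" "q - 1 \<noteq> 0" "Q \<noteq> 0" "R \<noteq> 0"
      for T P Q R d F q :: real
      unfolding that(1) using that(2-) by (simp add: field_simps)
    from this[OF tPQR, of "1 + e" "1 + E" ?q]
    have "mass_defect al (-e) 1 t = (?q - 1) / (Q * ?q) * (2 * P / (R * (1 + e)))"
      using defect(2)[OF that] PQR nz E by (simp add: mE)
    also have "\<dots> = eps_plus al / 2 * psi_high al e"
      unfolding eps_half psi_high_def psi E_def[symmetric] P_def[symmetric] using PQR al by (simp add: field_simps)
    finally show ?thesis using rel by simp
  qed
qed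

lemma rel_osc_f_pow_minus_1_eq_psi:
  assumes al: "al > 0" and e: "0 \<le> e" "e \<le> 1"
  shows "rel_osc (f_pow al) (-e) 1 = eps_plus al * psi al e"
  using rel_osc_f_pow_minus_1[OF al e] threshold_minus_1_le_iff[OF al e(1)] eta1_root(4)[OF al e(1)]
  by (cases "e \<le> eta1 al") (simp_all add: psi_eq_if)

text \<open>At \<open>\<eta>\<^sub>1\<close> the threshold coincides with \<open>\<eta>\<^sub>1\<close>, so both branches compute the same
  relative oscillation.\<close>

lemma psi_low_eta1_eq_psi_high:
  assumes al: "al > 0"
  shows "psi_low al (eta1 al) = psi_high al (eta1 al)"
proof -
  have e: "0 \<le> eta1 al" "eta1 al \<le> 1" using eta1_root(1,2)[OF al] by auto
  then have "eps_plus al * psi_low al (eta1 al) = eps_plus al * psi_high al (eta1 al)"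
    using rel_osc_f_pow_minus_1[OF al e] threshold_minus_1_le_iff[OF al e(1)] eta1_root(3)[OF al]
    by (metis order_refl)
  then show ?thesis using eps_plus_pos[OF al] by simp
qed

lemma continuous_on_psi:
  assumes al: "al > 0"
  shows "continuous_on {0..1} (psi al)"
proof -
  have pow: "continuous_on {0..1} (\<lambda>x::real. 1 + x powr (al + 1))"
    using al by (intro continuous_on_add continuous_on_const continuous_on_powr' continuous_on_id) auto
  have base: "continuous_on {0..1} (\<lambda>x::real. (1 + x powr (al + 1)) powr (1 / al))"
    "continuous_on {0..1} (\<lambda>x::real. (1 + x) powr ((al + 1) / al))"
     by (intro continuous_on_powr' pow continuous_on_const continuous_on_add continuous_on_id,
         force simp: add_nonneg_eq_0_iff)+
  have nz: "\<forall>x\<in>{0..1::real}. (1 + x) powr ((al + 1) / al) \<noteq> 0"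
    "\<forall>x\<in>{0..1::real}. 1 + x powr (al + 1) \<noteq> 0" "\<forall>x\<in>{0..1::real}. 1 + x \<noteq> 0"
    by (auto simp: add_nonneg_eq_0_iff)
  have low: "continuous_on {0..1} (psi_low al)" unfolding psi_low_def
    by (intro continuous_on_add continuous_on_mult continuous_on_diff continuous_on_divide
        continuous_on_const continuous_on_id base pow nz)
  have high: "continuous_on {0..1} (psi_high al)" unfolding psi_high_def
    by (intro continuous_on_mult continuous_on_divide continuous_on_const base nz)
  have "continuous_on {0..1} (\<lambda>x. if x \<le> eta1 al then psi_low al x else psi_high al x)"
    by (rule continuous_on_cases_le[where h="\<lambda>x. x"])
      (auto intro: continuous_on_subset[OF low] continuous_on_subset[OF high] continuous_on_id
        simp: psi_low_eta1_eq_psi_high[OF al])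
  then show ?thesis by (simp add: psi_eq_if[abs_def])
qed

lemma psi_attains_max:
  "al > 0 \<Longrightarrow> \<exists>e\<in>{0..1}. \<forall>z\<in>{0..1}. psi al z \<le> psi al e"
  using continuous_attains_sup[OF compact_Icc _ continuous_on_psi] by auto

lemma psi_0: "al > 0 \<Longrightarrow> psi al 0 = 1"
  using eta1_root(1)[of al] by (simp add: psi_eq_if psi_low_def)

lemma rel_osc_f_pow_le_psi_max:
  fixes al a b e :: real
  assumes al: "al > 0" and emax: "\<forall>z\<in>{0..1}. psi al z \<le> psi al e" and ab: "a < b"
  shows "rel_osc (f_pow al) a b \<le> eps_plus al * psi al e"
proof -
  have g: "al > -1" "al \<noteq> 0" using al by auto
  have "1 \<le> psi al e" using emax psi_0[OF al] by force
  then have "eps_plus al \<le> eps_plus al * psi al e" using eps_plus_pos[OF al] by simp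
  then have nonneg: "rel_osc (f_pow al) a' b' \<le> eps_plus al * psi al e" if "0 \<le> a'" "a' < b'" for a' b'
    using rel_osc_f_pow_nonneg_le[OF al that] by linarith
  have mixed: "rel_osc (f_pow al) a' b' \<le> eps_plus al * psi al e" if "a' < 0" "-a' \<le> b'" for a' b'
  proof -
    have b': "b' > 0" using that by simp
    have "rel_osc (f_pow al) a' b' = rel_osc (f_pow al) (- (-a' / b')) 1"
      using rel_osc_f_pow_mult[OF b' g, of "a' / b'" 1] that by simp
    also have "\<dots> = eps_plus al * psi al (-a' / b')"
      using that b' by (intro rel_osc_f_pow_minus_1_eq_psi[OF al]) (simp_all add: divide_le_eq le_divide_eq)
    also have "\<dots> \<le> eps_plus al * psi al e"
      using emax[rule_format, of "-a' / b'"] eps_plus_pos[OF al] that b' by (simp add: divide_le_eq le_divide_eq)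
    finally show ?thesis .
  qed
  consider "0 \<le> a" | "b \<le> 0" | "a < 0" "-a \<le> b" | "0 < b" "b < -a" by linarith
  then show ?thesis
  proof cases
    case 2
    then show ?thesis using nonneg[of "-b" "-a"] rel_osc_f_pow_reflect[OF g ab] ab by simp
  next
    case 4
    then show ?thesis using mixed[of "-b" "-a"] rel_osc_f_pow_reflect[OF g ab] by simp
  qed (use nonneg mixed ab in auto)
qed

lemma GR_norm_f_pow_nonneg:
  assumes al: "al > 0"
  shows "GR_norm (f_pow al) {0..} = eps_plus al"
  unfolding GR_norm_def
proof (rule cSup_eq_maximum)
  have "eps_plus al = rel_osc (f_pow al) 0 1 \<and> (0::real) < 1 \<and> {0::real..1} \<subseteq> {0..}"
    using rel_osc_f_pow_0_1[OF al] by simp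
  then show "eps_plus al \<in> {rel_osc (f_pow al) a b |a b. a < b \<and> {a..b} \<subseteq> {0..}}"
    by blast
qed (use rel_osc_f_pow_nonneg_le[OF al] in fastforce)

lemma GR_norm_f_pow_UNIV:
  assumes al: "al > 0" and e: "e \<in> {0..1}" and emax: "\<forall>z\<in>{0..1}. psi al z \<le> psi al e"
  shows "GR_norm (f_pow al) UNIV = eps_plus al * psi al e"
  unfolding GR_norm_def
proof (rule cSup_eq_maximum)
  have "eps_plus al * psi al e = rel_osc (f_pow al) (-e) 1 \<and> -e < 1 \<and> {-e..1} \<subseteq> UNIV"
    using rel_osc_f_pow_minus_1_eq_psi[OF al] e by simp
  then show "eps_plus al * psi al e \<in> {rel_osc (f_pow al) a b |a b. a < b \<and> {a..b} \<subseteq> UNIV}"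
    by blast
qed (use rel_osc_f_pow_le_psi_max[OF al emax] in fastforce)

lemma GR_norm_f_pow_dual:
  assumes al: "al > 0"
    and R: "\<And>a b. a < b \<Longrightarrow> {a..b} \<subseteq> R \<longleftrightarrow> {spowr (al + 1) a..spowr (al + 1) b} \<subseteq> R"
  shows "GR_norm (f_pow (- al / (al + 1))) R = GR_norm (f_pow al) R"
proof -
  let ?q = "al + 1"
  have q: "?q > 0" "1 / ?q > 0" using al by auto
  have "{rel_osc (f_pow (- al / ?q)) c d |c d. c < d \<and> {c..d} \<subseteq> R}
      = {rel_osc (f_pow al) a b |a b. a < b \<and> {a..b} \<subseteq> R}"
  proof (intro equalityI subsetI)
    fix x assume "x \<in> {rel_osc (f_pow (- al / ?q)) c d |c d. c < d \<and> {c..d} \<subseteq> R}"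
    then obtain c d where cd: "x = rel_osc (f_pow (- al / ?q)) c d" "c < d" "{c..d} \<subseteq> R" by blast
    define a where "a = spowr (1 / ?q) c"
    define b where "b = spowr (1 / ?q) d"
    have ab: "a < b" unfolding a_def b_def by (rule spowr_strict_mono[OF q(2) cd(2)])
    have "spowr ?q a = c" "spowr ?q b = d"
      using spowr_spowr[OF q(2)] by (simp_all add: a_def b_def)
    then have "x = rel_osc (f_pow al) a b \<and> a < b \<and> {a..b} \<subseteq> R"
      using cd R[OF ab] rel_osc_f_pow_dual[OF al ab] ab by simp
    then show "x \<in> {rel_osc (f_pow al) a b |a b. a < b \<and> {a..b} \<subseteq> R}" by blast
  next
    fix x assume "x \<in> {rel_osc (f_pow al) a b |a b. a < b \<and> {a..b} \<subseteq> R}"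
    then obtain a b where ab: "x = rel_osc (f_pow al) a b" "a < b" "{a..b} \<subseteq> R" by blast
    then have "x = rel_osc (f_pow (- al / ?q)) (spowr ?q a) (spowr ?q b)
        \<and> spowr ?q a < spowr ?q b \<and> {spowr ?q a..spowr ?q b} \<subseteq> R"
      using R[OF ab(2)] rel_osc_f_pow_dual[OF al ab(2)] spowr_strict_mono[OF q(1) ab(2)] by simp
    then show "x \<in> {rel_osc (f_pow (- al / ?q)) c d |c d. c < d \<and> {c..d} \<subseteq> R}" by blast
  qed
  then show ?thesis by (simp add: GR_norm_def)
qed

lemma spowr_Icc_subset_nonneg_iff:
  assumes "q > 0" "a < b"
  shows "{a..b} \<subseteq> {0..} \<longleftrightarrow> {spowr q a..spowr q b} \<subseteq> {0..}"
  using assms spowr_strict_mono[of q a b] spowr_le_iff[of q 0 a] by (auto simp: spowr_nonneg)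

lemma eps_plus_conjugate_exponent:
  fixes p :: real
  assumes p: "p > 1"
  shows "eps_plus (1 / (p - 1)) = 2 * (p - 1) powr (p - 1) / p powr p"
proof -
  have "1 / (p - 1) + 1 = p / (p - 1)" "(1 / (p - 1) + 1) / (1 / (p - 1)) = p"
    using p by (simp_all add: field_simps)
  then have "eps_plus (1 / (p - 1)) = 2 / (p - 1) * (p - 1) powr p / p powr p"
    using p by (simp add: eps_plus_def powr_divide)
  also have "(p - 1) powr p = (p - 1) powr ((p - 1) + 1)" by simp
  also have "\<dots> = (p - 1) powr (p - 1) * (p - 1) powr 1" by (rule powr_add)
  finally show ?thesis using p by simp
qed

theorem corollary2p3:
  fixes p :: real
  assumes "p > 1"
  shows "GR_norm (f_pow (1 / (p - 1))) UNIV = GR_norm (f_pow (- 1 / p)) UNIV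
    \<and> (\<exists>\<eta>\<in>{0..1}. \<forall>\<zeta>\<in>{0..1}. psi (1 / (p - 1)) \<zeta> \<le> psi (1 / (p - 1)) \<eta>)
    \<and> GR_norm (f_pow (1 / (p - 1))) UNIV
        = GR_norm (f_pow (1 / (p - 1))) {0..} * (SUP \<eta>\<in>{0..1}. psi (1 / (p - 1)) \<eta>)
    \<and> GR_norm (f_pow (1 / (p - 1))) {0..} = GR_norm (f_pow (- 1 / p)) {0..}
    \<and> GR_norm (f_pow (- 1 / p)) {0..} = 2 * (p - 1) powr (p - 1) / p powr p"
proof -
  define al where "al = 1 / (p - 1)"
  have al: "al > 0" using assms by (simp add: al_def)
  have dual: "- 1 / p = - al / (al + 1)" using assms by (simp add: al_def field_simps)
  obtain e where e: "e \<in> {0..1}" "\<forall>z\<in>{0..1}. psi al z \<le> psi al e"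
    using psi_attains_max[OF al] by blast
  then have "\<exists>\<eta>\<in>{0..1}. \<forall>\<zeta>\<in>{0..1}. psi al \<zeta> \<le> psi al \<eta>" by blast
  moreover have "(SUP \<eta>\<in>{0..1}. psi al \<eta>) = psi al e"
    using e by (intro cSup_eq_maximum) auto
  moreover have "GR_norm (f_pow (- 1 / p)) UNIV = GR_norm (f_pow al) UNIV"
    unfolding dual by (intro GR_norm_f_pow_dual al) simp
  moreover have "GR_norm (f_pow (- 1 / p)) {0..} = GR_norm (f_pow al) {0..}"
    unfolding dual by (intro GR_norm_f_pow_dual al spowr_Icc_subset_nonneg_iff) (use al in auto)
  ultimately show ?thesis
    using GR_norm_f_pow_UNIV[OF al e] GR_norm_f_pow_nonneg[OF al] eps_plus_conjugate_exponent[OF assms]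
    by (simp add: al_def)
qed

end
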